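(* Let $\mathcal{X}$ be a finite set, $\pi$ a probability mass function on $\mathcal{X}$ with full support, and $P$ an ergodic $\pi$-reversible (self-adjoint on $\ell^2(\pi)$) transition matrix. Let a group $\mathcal{G}$ act on $\mathcal{X}$ and let $M$, $B$ be the Metropolis–Hastings and Barker orbit kernels. Then $\rho(MPM)\le\rho(P)$ and $\rho(BPB)\le\rho(P)$.
   Context: $\langle f,g\rangle_\pi=\sum_x f(x)g(x)\pi(x)$ and $\ell^2_0(\pi)=\{f:\sum_x f(x)\pi(x)=0\}$. With $\mathcal{O}(x)$ the orbit of $x$: $M(x,y)=\frac{1}{|\mathcal{O}(x)|-1}\min\{1,\pi(y)/\pi(x)\}$ for $y\in\mathcal{O}(x)\setminus\{x\}$, $M(x,y)=0$ for $y\notin\mathcal{O}(x)$, $M(x,x)=1-\sum_{y\ne x}M(x,y)$ (so $M(x,x)=1$ if the orbit is a singleton); $B$ is defined identically with acceptance $\pi(y)/(\pi(x)+\pi(y))$. For a $\pi$-self-adjoint kernel $K$, $\rho(K)=\sup_{0\ne f\in\ell^2_0(\pi)}|\langle f,Kf\rangle_\pi|/\langle f,f\rangle_\pi$. *)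

theory Defs
  imports Complex_Main "HOL-Algebra.Group_Action"
begin

definition ip :: "('a::finite \<Rightarrow> real) \<Rightarrow> ('a \<Rightarrow> real) \<Rightarrow> ('a \<Rightarrow> real) \<Rightarrow> real" where
  "ip \<pi> f g = (\<Sum>x\<in>UNIV. f x * g x * \<pi> x)"

definition l2_0 :: "('a::finite \<Rightarrow> real) \<Rightarrow> ('a \<Rightarrow> real) set" where
  "l2_0 \<pi> = {f. (\<Sum>x\<in>UNIV. f x * \<pi> x) = 0}"

definition kapply :: "('a::finite \<Rightarrow> 'a \<Rightarrow> real) \<Rightarrow> ('a \<Rightarrow> real) \<Rightarrow> ('a \<Rightarrow> real)" where
  "kapply K f = (\<lambda>x. \<Sum>y\<in>UNIV. K x y * f y)"

definition kmult :: "('a::finite \<Rightarrow> 'a \<Rightarrow> real) \<Rightarrow> ('a \<Rightarrow> 'a \<Rightarrow> real) \<Rightarrow> ('a \<Rightarrow> 'a \<Rightarrow> real)" where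
  "kmult K L = (\<lambda>x y. \<Sum>z\<in>UNIV. K x z * L z y)"

fun kpow :: "('a::finite \<Rightarrow> 'a \<Rightarrow> real) \<Rightarrow> nat \<Rightarrow> ('a \<Rightarrow> 'a \<Rightarrow> real)" where
  "kpow K 0 = (\<lambda>x y. if x = y then 1 else 0)"
| "kpow K (Suc n) = kmult (kpow K n) K"

definition rho :: "('a::finite \<Rightarrow> real) \<Rightarrow> ('a \<Rightarrow> 'a \<Rightarrow> real) \<Rightarrow> real" where
  "rho \<pi> K = Sup {\<bar>ip \<pi> f (kapply K f)\<bar> / ip \<pi> f f | f. f \<in> l2_0 \<pi> \<and> f \<noteq> (\<lambda>_. 0)}"

definition pmf_full_support :: "('a::finite \<Rightarrow> real) \<Rightarrow> bool" where
  "pmf_full_support \<pi> \<longleftrightarrow> (\<forall>x. \<pi> x > 0) \<and> (\<Sum>x\<in>UNIV. \<pi> x) = 1"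

definition stochastic :: "('a::finite \<Rightarrow> 'a \<Rightarrow> real) \<Rightarrow> bool" where
  "stochastic P \<longleftrightarrow> (\<forall>x y. P x y \<ge> 0) \<and> (\<forall>x. (\<Sum>y\<in>UNIV. P x y) = 1)"

definition reversible :: "('a::finite \<Rightarrow> real) \<Rightarrow> ('a \<Rightarrow> 'a \<Rightarrow> real) \<Rightarrow> bool" where
  "reversible \<pi> P \<longleftrightarrow> (\<forall>x y. \<pi> x * P x y = \<pi> y * P y x)"

definition irreducible_kernel :: "('a::finite \<Rightarrow> 'a \<Rightarrow> real) \<Rightarrow> bool" where
  "irreducible_kernel P \<longleftrightarrow> (\<forall>x y. \<exists>n. kpow P n x y > 0)"

definition aperiodic_kernel :: "('a::finite \<Rightarrow> 'a \<Rightarrow> real) \<Rightarrow> bool" where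
  "aperiodic_kernel P \<longleftrightarrow> (\<forall>x. Gcd {n. n > 0 \<and> kpow P n x x > 0} = (1::nat))"

definition ergodic :: "('a::finite \<Rightarrow> 'a \<Rightarrow> real) \<Rightarrow> bool" where
  "ergodic P \<longleftrightarrow> stochastic P \<and> irreducible_kernel P \<and> aperiodic_kernel P"

definition orbit_kernel ::
  "('g, 'c) monoid_scheme \<Rightarrow> ('g \<Rightarrow> 'a::finite \<Rightarrow> 'a) \<Rightarrow> ('a \<Rightarrow> 'a \<Rightarrow> real) \<Rightarrow> ('a \<Rightarrow> 'a \<Rightarrow> real)" where
  "orbit_kernel G \<phi> acc = (\<lambda>x y.
     let off = (\<lambda>z. if z \<in> orbit G \<phi> x \<and> z \<noteq> x
                     then acc x z / (real (card (orbit G \<phi> x)) - 1) else 0)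
     in if y = x then 1 - (\<Sum>z\<in>UNIV - {x}. off z) else off y)"

definition MH_orbit_kernel where
  "MH_orbit_kernel G \<phi> \<pi> = orbit_kernel G \<phi> (\<lambda>x y. min 1 (\<pi> y / \<pi> x))"

definition Barker_orbit_kernel where
  "Barker_orbit_kernel G \<phi> \<pi> = orbit_kernel G \<phi> (\<lambda>x y. \<pi> y / (\<pi> x + \<pi> y))"

end

theory Submission
  imports Defs
begin

text \<open>Both orbit kernels are \<pi>-reversible Markov kernels, hence self-adjoint contractions of
  \<open>\<ell>\<^sup>2(\<pi>)\<close> that preserve \<open>\<ell>\<^sup>2\<^sub>0(\<pi>)\<close>. For such a \<open>K\<close> and \<open>f \<in> \<ell>\<^sup>2\<^sub>0(\<pi>)\<close>,
  \<open>\<langle>f, KPKf\<rangle> = \<langle>Kf, P(Kf)\<rangle>\<close>, so \<open>|\<langle>f, KPKf\<rangle>| \<le> \<rho>(P) \<langle>Kf, Kf\<rangle> \<le> \<rho>(P) \<langle>f, f\<rangle>\<close>.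
  Neither the specific acceptance functions nor the ergodicity of \<open>P\<close> beyond stochasticity
  matter: any acceptance function in \<open>[0, 1]\<close> satisfying detailed balance will do.\<close>

lemma ip_self_pos:
  assumes "\<forall>x. \<pi> x > 0" and "f \<noteq> (\<lambda>_. 0)"
  shows "ip \<pi> f f > 0"
proof -
  obtain a where a: "f a \<noteq> 0" using assms(2) by auto
  have "0 < f a * f a" by (metis a not_real_square_gt_zero)
  then have "0 < f a * f a * \<pi> a" using assms(1) by simp
  moreover have "0 \<le> f x * f x * \<pi> x" for x using assms(1) by (simp add: less_imp_le)
  ultimately show ?thesis unfolding ip_def by (intro sum_pos2[of UNIV a]) auto
qed

lemma kapply_kmult: "kapply (kmult K L) f = kapply K (kapply L f)"
proof
  fix x
  have "kapply (kmult K L) f x = (\<Sum>y\<in>UNIV. \<Sum>z\<in>UNIV. K x z * L z y * f y)"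
    unfolding kapply_def kmult_def by (simp add: sum_distrib_right)
  also have "\<dots> = (\<Sum>z\<in>UNIV. \<Sum>y\<in>UNIV. K x z * L z y * f y)" by (rule sum.swap)
  also have "\<dots> = kapply K (kapply L f) x"
    unfolding kapply_def by (simp add: sum_distrib_left mult.assoc)
  finally show "kapply (kmult K L) f x = kapply K (kapply L f) x" .
qed

lemma reversible_ip_kapply:
  assumes "reversible \<pi> K"
  shows "ip \<pi> f (kapply K g) = ip \<pi> (kapply K f) g"
proof -
  have "ip \<pi> f (kapply K g) = (\<Sum>x\<in>UNIV. \<Sum>y\<in>UNIV. f x * g y * (\<pi> x * K x y))"
    unfolding ip_def kapply_def
    by (auto simp: sum_distrib_left sum_distrib_right mult_ac intro!: sum.cong)
  also have "\<dots> = (\<Sum>x\<in>UNIV. \<Sum>y\<in>UNIV. f x * g y * (\<pi> y * K y x))"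
    using assms by (simp add: reversible_def)
  also have "\<dots> = (\<Sum>y\<in>UNIV. \<Sum>x\<in>UNIV. f x * g y * (\<pi> y * K y x))"
    by (rule sum.swap)
  also have "\<dots> = ip \<pi> (kapply K f) g"
    unfolding ip_def kapply_def
    by (auto simp: sum_distrib_left sum_distrib_right mult_ac intro!: sum.cong)
  finally show ?thesis .
qed

lemma reversible_stationary:
  assumes "stochastic K" and "reversible \<pi> K"
  shows "(\<Sum>x\<in>UNIV. K x y * \<pi> x) = \<pi> y"
proof -
  have "(\<Sum>x\<in>UNIV. K x y * \<pi> x) = (\<Sum>x\<in>UNIV. \<pi> y * K y x)"
    using assms(2) by (auto simp: reversible_def mult.commute intro!: sum.cong)
  also have "\<dots> = \<pi> y" using assms(1) by (simp add: stochastic_def flip: sum_distrib_left)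
  finally show ?thesis .
qed

lemma kapply_in_l2_0:
  assumes "stochastic K" and "reversible \<pi> K" and "f \<in> l2_0 \<pi>"
  shows "kapply K f \<in> l2_0 \<pi>"
proof -
  have "(\<Sum>x\<in>UNIV. kapply K f x * \<pi> x) = (\<Sum>x\<in>UNIV. \<Sum>y\<in>UNIV. f y * (K x y * \<pi> x))"
    unfolding kapply_def
    by (auto simp: sum_distrib_right sum_distrib_left mult_ac intro!: sum.cong)
  also have "\<dots> = (\<Sum>y\<in>UNIV. f y * (\<Sum>x\<in>UNIV. K x y * \<pi> x))"
    by (subst sum.swap) (simp add: sum_distrib_left)
  also have "\<dots> = (\<Sum>y\<in>UNIV. f y * \<pi> y)"
    using reversible_stationary[OF assms(1,2)] by simp
  also have "\<dots> = 0" using assms(3) by (simp add: l2_0_def)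
  finally show ?thesis by (simp add: l2_0_def)
qed

lemma weighted_mean_square_le:
  fixes a :: "'a::finite \<Rightarrow> real"
  assumes "\<forall>y. a y \<ge> 0" and "(\<Sum>y\<in>UNIV. a y) = 1"
  shows "(\<Sum>y\<in>UNIV. a y * f y)\<^sup>2 \<le> (\<Sum>y\<in>UNIV. a y * (f y)\<^sup>2)"
proof -
  define m where "m = (\<Sum>y\<in>UNIV. a y * f y)"
  have "0 \<le> (\<Sum>y\<in>UNIV. a y * (f y - m)\<^sup>2)"
    using assms(1) by (intro sum_nonneg) simp
  also have "\<dots> = (\<Sum>y\<in>UNIV. a y * (f y)\<^sup>2) - 2 * m * (\<Sum>y\<in>UNIV. a y * f y)
      + m\<^sup>2 * (\<Sum>y\<in>UNIV. a y)"
    by (simp add: power2_diff algebra_simps sum.distrib sum_subtractf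
        sum_distrib_left sum_distrib_right)
  finally show ?thesis using assms(2) by (simp add: m_def power2_eq_square)
qed

lemma reversible_contraction:
  assumes "stochastic K" and "reversible \<pi> K" and "\<forall>x. \<pi> x > 0"
  shows "ip \<pi> (kapply K f) (kapply K f) \<le> ip \<pi> f f"
proof -
  have "ip \<pi> (kapply K f) (kapply K f) = (\<Sum>x\<in>UNIV. \<pi> x * (\<Sum>y\<in>UNIV. K x y * f y)\<^sup>2)"
    unfolding ip_def kapply_def by (simp add: power2_eq_square mult_ac)
  also have "\<dots> \<le> (\<Sum>x\<in>UNIV. \<pi> x * (\<Sum>y\<in>UNIV. K x y * (f y)\<^sup>2))"
    using assms
    by (intro sum_mono mult_left_mono weighted_mean_square_le)
       (auto simp: stochastic_def less_imp_le)
  also have "\<dots> = (\<Sum>x\<in>UNIV. \<Sum>y\<in>UNIV. (f y)\<^sup>2 * (K x y * \<pi> x))"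
    by (simp add: sum_distrib_left mult_ac)
  also have "\<dots> = (\<Sum>y\<in>UNIV. (f y)\<^sup>2 * (\<Sum>x\<in>UNIV. K x y * \<pi> x))"
    by (subst sum.swap) (simp add: sum_distrib_left)
  also have "\<dots> = ip \<pi> f f"
    using reversible_stationary[OF assms(1,2)] by (simp add: ip_def power2_eq_square)
  finally show ?thesis .
qed

lemma abs_ip_le_half_sum:
  assumes "\<forall>x. \<pi> x > 0"
  shows "\<bar>ip \<pi> f g\<bar> \<le> (ip \<pi> f f + ip \<pi> g g) / 2"
proof -
  have "\<bar>ip \<pi> f g\<bar> \<le> (\<Sum>x\<in>UNIV. \<bar>f x * g x * \<pi> x\<bar>)"
    unfolding ip_def by (rule sum_abs)
  also have "\<dots> = (\<Sum>x\<in>UNIV. \<bar>f x * g x\<bar> * \<pi> x)"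
    using assms by (intro sum.cong) (auto simp: abs_mult abs_of_pos)
  also have "\<dots> \<le> (\<Sum>x\<in>UNIV. (f x * f x + g x * g x) / 2 * \<pi> x)"
  proof (intro sum_mono mult_right_mono)
    fix x
    show "\<bar>f x * g x\<bar> \<le> (f x * f x + g x * g x) / 2"
      using sum_squares_bound[of "\<bar>f x\<bar>" "\<bar>g x\<bar>"] by (simp add: abs_mult power2_eq_square)
    show "0 \<le> \<pi> x" using assms by (simp add: less_imp_le)
  qed
  also have "\<dots> = (ip \<pi> f f + ip \<pi> g g) / 2"
    unfolding ip_def by (simp add: algebra_simps sum.distrib flip: sum_divide_distrib)
  finally show ?thesis .
qed

lemma abs_ip_kapply_le:
  assumes "stochastic K" and "reversible \<pi> K" and "\<forall>x. \<pi> x > 0"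
  shows "\<bar>ip \<pi> f (kapply K f)\<bar> \<le> ip \<pi> f f"
  using abs_ip_le_half_sum[OF assms(3), of f "kapply K f"] reversible_contraction[OF assms, of f]
  by simp

lemma abs_ip_kapply_le_rho:
  assumes "stochastic P" and "reversible \<pi> P" and "\<forall>x. \<pi> x > 0" and "f \<in> l2_0 \<pi>"
  shows "\<bar>ip \<pi> f (kapply P f)\<bar> \<le> rho \<pi> P * ip \<pi> f f"
proof (cases "f = (\<lambda>_. 0)")
  case False
  let ?R = "{\<bar>ip \<pi> g (kapply P g)\<bar> / ip \<pi> g g | g. g \<in> l2_0 \<pi> \<and> g \<noteq> (\<lambda>_. 0)}"
  have "bdd_above ?R"
  proof (rule bdd_aboveI)
    fix v assume "v \<in> ?R"
    then obtain g where "g \<noteq> (\<lambda>_. 0)" and "v = \<bar>ip \<pi> g (kapply P g)\<bar> / ip \<pi> g g" by auto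
    with ip_self_pos[OF assms(3)] abs_ip_kapply_le[OF assms(1-3)] show "v \<le> 1" by simp
  qed
  then have "\<bar>ip \<pi> f (kapply P f)\<bar> / ip \<pi> f f \<le> rho \<pi> P"
    unfolding rho_def using assms(4) False by (intro cSup_upper) auto
  with ip_self_pos[OF assms(3) False] show ?thesis by (simp add: divide_le_eq)
qed (simp add: ip_def)

lemma rho_nonneg:
  assumes "stochastic P" and "reversible \<pi> P" and "\<forall>x. \<pi> x > 0"
    and "f \<in> l2_0 \<pi>" and "f \<noteq> (\<lambda>_. 0)"
  shows "0 \<le> rho \<pi> P"
proof -
  have "0 \<le> rho \<pi> P * ip \<pi> f f"
    using abs_ip_kapply_le_rho[OF assms(1-4)] by (rule order.trans[OF abs_ge_zero])
  with ip_self_pos[OF assms(3,5)] show ?thesis by (simp add: zero_le_mult_iff)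
qed

lemma rho_le:
  assumes "\<exists>f. f \<in> l2_0 \<pi> \<and> f \<noteq> (\<lambda>_. 0)" and "\<forall>x. \<pi> x > 0"
    and "\<And>f. f \<in> l2_0 \<pi> \<Longrightarrow> f \<noteq> (\<lambda>_. 0) \<Longrightarrow> \<bar>ip \<pi> f (kapply K f)\<bar> \<le> c * ip \<pi> f f"
  shows "rho \<pi> K \<le> c"
  unfolding rho_def
proof (rule cSup_least)
  fix v assume "v \<in> {\<bar>ip \<pi> f (kapply K f)\<bar> / ip \<pi> f f | f. f \<in> l2_0 \<pi> \<and> f \<noteq> (\<lambda>_. 0)}"
  then obtain f where "f \<in> l2_0 \<pi>" "f \<noteq> (\<lambda>_. 0)"
    and "v = \<bar>ip \<pi> f (kapply K f)\<bar> / ip \<pi> f f" by auto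
  with assms(3) ip_self_pos[OF assms(2)] show "v \<le> c" by (simp add: divide_le_eq)
qed (use assms(1) in auto)

lemma rho_sandwich_le:
  assumes "\<forall>x. \<pi> x > 0"
    and "stochastic K" and "reversible \<pi> K"
    and "stochastic P" and "reversible \<pi> P"
  shows "rho \<pi> (kmult (kmult K P) K) \<le> rho \<pi> P"
proof (cases "\<exists>f. f \<in> l2_0 \<pi> \<and> f \<noteq> (\<lambda>_. 0)")
  case True
  then have rho_P_nonneg: "0 \<le> rho \<pi> P" using rho_nonneg[OF assms(4,5,1)] by blast
  show ?thesis
  proof (rule rho_le[OF True assms(1)])
    fix f assume f: "f \<in> l2_0 \<pi>"
    have "ip \<pi> f (kapply (kmult (kmult K P) K) f) = ip \<pi> (kapply K f) (kapply P (kapply K f))"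
      by (simp add: kapply_kmult reversible_ip_kapply[OF assms(3)])
    also have "\<bar>\<dots>\<bar> \<le> rho \<pi> P * ip \<pi> (kapply K f) (kapply K f)"
      using abs_ip_kapply_le_rho[OF assms(4,5,1) kapply_in_l2_0[OF assms(2,3) f]] .
    also have "\<dots> \<le> rho \<pi> P * ip \<pi> f f"
      using reversible_contraction[OF assms(2,3,1)] rho_P_nonneg by (rule mult_left_mono)
    finally show "\<bar>ip \<pi> f (kapply (kmult (kmult K P) K) f)\<bar> \<le> rho \<pi> P * ip \<pi> f f" .
  qed
next
  case False
  \<comment> \<open>one-point state space: both sides are the junk value \<open>Sup {}\<close>\<close>
  then have no_quotients:
    "{\<bar>ip \<pi> f (kapply L f)\<bar> / ip \<pi> f f | f. f \<in> l2_0 \<pi> \<and> f \<noteq> (\<lambda>_. 0)} = {}" for L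
    by auto
  show ?thesis unfolding rho_def by (simp only: no_quotients order_refl)
qed

lemma orbit_eq_if_mem:
  assumes "group_action G (UNIV :: 'a set) \<phi>" and "y \<in> orbit G \<phi> x"
  shows "orbit G \<phi> y = orbit G \<phi> x"
proof -
  interpret group_action G "UNIV :: 'a set" \<phi> by (rule assms(1))
  have "x \<in> orbit G \<phi> y" using orbit_sym assms(2) by simp
  then show ?thesis using orbit_trans assms(2) by blast
qed

lemma orbit_kernel_off_diag:
  assumes "y \<noteq> x"
  shows "orbit_kernel G \<phi> acc x y
    = (if y \<in> orbit G \<phi> x then acc x y / (real (card (orbit G \<phi> x)) - 1) else 0)"
  using assms by (simp add: orbit_kernel_def)

lemma orbit_kernel_diag:
  "orbit_kernel G \<phi> acc x x = 1 - (\<Sum>y\<in>UNIV - {x}. orbit_kernel G \<phi> acc x y)"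
  by (simp add: orbit_kernel_def Let_def)

lemma orbit_kernel_stochastic:
  assumes "group_action G (UNIV :: 'a::finite set) \<phi>"
    and "\<And>x y. 0 \<le> acc x y" and "\<And>x y. acc x y \<le> 1"
  shows "stochastic (orbit_kernel G \<phi> acc)"
proof -
  let ?K = "orbit_kernel G \<phi> acc"
  have x_in_orbit: "x \<in> orbit G \<phi> x" for x
    using group_action.orbit_refl[OF assms(1)] by simp
  then have card_ge_1: "card (orbit G \<phi> x) \<ge> 1" for x
    by (metis One_nat_def Suc_leI card_gt_0_iff empty_iff finite)
  have off_diag_nonneg: "0 \<le> ?K x y" if "y \<noteq> x" for x y
    using that card_ge_1[of x] assms(2) by (simp add: orbit_kernel_off_diag)
  have off_diag_sum_le_1: "(\<Sum>y\<in>UNIV - {x}. ?K x y) \<le> 1" for x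
  proof -
    define c where "c = real (card (orbit G \<phi> x)) - 1"
    have "(\<Sum>y\<in>UNIV - {x}. ?K x y) \<le> (\<Sum>y\<in>UNIV - {x}. if y \<in> orbit G \<phi> x then 1 / c else 0)"
      using card_ge_1[of x] assms(3)
      by (intro sum_mono) (auto simp: orbit_kernel_off_diag c_def intro: divide_right_mono)
    also have "\<dots> = (\<Sum>y\<in>orbit G \<phi> x - {x}. 1 / c)"
      by (simp add: sum.If_cases Diff_eq Int_commute)
    also have "\<dots> = c * (1 / c)"
      using x_in_orbit[of x] card_ge_1[of x] by (simp add: c_def card_Diff_singleton of_nat_diff)
    also have "\<dots> \<le> 1" by (cases "c = 0") auto
    finally show ?thesis .
  qed
  have "0 \<le> ?K x y" for x y
    using off_diag_nonneg[of y x] off_diag_sum_le_1[of x]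
    by (cases "y = x") (simp_all add: orbit_kernel_diag)
  moreover have "(\<Sum>y\<in>UNIV. ?K x y) = 1" for x
    by (simp add: sum.remove[of UNIV x] orbit_kernel_diag)
  ultimately show ?thesis by (simp add: stochastic_def)
qed

lemma orbit_kernel_reversible:
  assumes "group_action G (UNIV :: 'a::finite set) \<phi>"
    and "\<And>x y. \<pi> x * acc x y = \<pi> y * acc y x"
  shows "reversible \<pi> (orbit_kernel G \<phi> acc)"
  unfolding reversible_def
proof (intro allI)
  fix x y
  show "\<pi> x * orbit_kernel G \<phi> acc x y = \<pi> y * orbit_kernel G \<phi> acc y x"
  proof (cases "y = x")
    case False
    have "y \<in> orbit G \<phi> x \<longleftrightarrow> x \<in> orbit G \<phi> y"
      using group_action.orbit_sym[OF assms(1)] by blast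
    moreover have "y \<in> orbit G \<phi> x \<Longrightarrow> orbit G \<phi> y = orbit G \<phi> x"
      by (rule orbit_eq_if_mem[OF assms(1)])
    ultimately show ?thesis
      using False assms(2)[of x y] by (simp add: orbit_kernel_off_diag)
  qed simp
qed

lemma orbit_kernel_sandwich_le:
  assumes "\<forall>x. \<pi> x > 0" and "stochastic P" and "reversible \<pi> P"
    and "group_action G (UNIV :: 'a::finite set) \<phi>"
    and "\<And>x y. 0 \<le> acc x y" and "\<And>x y. acc x y \<le> 1"
    and "\<And>x y. \<pi> x * acc x y = \<pi> y * acc y x"
  shows "rho \<pi> (kmult (kmult (orbit_kernel G \<phi> acc) P) (orbit_kernel G \<phi> acc)) \<le> rho \<pi> P"
  using rho_sandwich_le[OF assms(1) orbit_kernel_stochastic[OF assms(4-6)]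
      orbit_kernel_reversible[OF assms(4,7)] assms(2,3)] .

lemma MH_acceptance_balance:
  fixes a b :: real
  assumes "a > 0" and "b > 0"
  shows "a * min 1 (b / a) = b * min 1 (a / b)"
  using assms by (simp add: min_def field_simps)

theorem proposition3p3:
  fixes \<pi> :: "'a::finite \<Rightarrow> real"
    and P :: "'a \<Rightarrow> 'a \<Rightarrow> real"
    and G :: "('g, 'c) monoid_scheme"
    and \<phi> :: "'g \<Rightarrow> 'a \<Rightarrow> 'a"
  assumes "pmf_full_support \<pi>"
    and "ergodic P"
    and "reversible \<pi> P"
    and "group_action G (UNIV :: 'a set) \<phi>"
  shows "rho \<pi> (kmult (kmult (MH_orbit_kernel G \<phi> \<pi>) P) (MH_orbit_kernel G \<phi> \<pi>)) \<le> rho \<pi> P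
     \<and> rho \<pi> (kmult (kmult (Barker_orbit_kernel G \<phi> \<pi>) P) (Barker_orbit_kernel G \<phi> \<pi>)) \<le> rho \<pi> P"
proof -
  have pos: "\<forall>x. \<pi> x > 0" using assms(1) by (simp add: pmf_full_support_def)
  have stoch: "stochastic P" using assms(2) by (simp add: ergodic_def)
  note sandwich = orbit_kernel_sandwich_le[OF pos stoch assms(3,4)]
  have "rho \<pi> (kmult (kmult (MH_orbit_kernel G \<phi> \<pi>) P) (MH_orbit_kernel G \<phi> \<pi>)) \<le> rho \<pi> P"
    unfolding MH_orbit_kernel_def
    by (rule sandwich) (use pos in \<open>auto simp: less_imp_le intro: MH_acceptance_balance\<close>)
  moreover have "rho \<pi> (kmult (kmult (Barker_orbit_kernel G \<phi> \<pi>) P) (Barker_orbit_kernel G \<phi> \<pi>))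
      \<le> rho \<pi> P"
    unfolding Barker_orbit_kernel_def
    by (rule sandwich) (use pos in \<open>auto simp: add_pos_pos less_imp_le add.commute\<close>)
  ultimately show ?thesis ..
qed

end
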